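(* Every connected $D$-regular graph $G=(V,E)$ which is curvature sharp at all vertices has constant Bakry-\'Emery curvature, i.e. there is $\mathcal K\in\mathbb R$ with $\mathcal K_\infty(x)=\mathcal K$ for all $x\in V$.
   Context: For $f:V\to\mathbb R$, $\Delta f(x)=\sum_{y\sim x}(f(y)-f(x))$, $2\Gamma(f,g)=\Delta(fg)-f\Delta g-g\Delta f$, $2\Gamma_2(f,g)=\Delta\Gamma(f,g)-\Gamma(f,\Delta g)-\Gamma(g,\Delta f)$. The Bakry-\'Emery curvature $\mathcal K_\infty(x)$ is the supremum of all $K\in\mathbb R$ with $\Gamma_2(f,f)(x)\ge K\Gamma(f,f)(x)$ for all $f$. For a $D$-regular graph, $\mathcal K_\infty(x)\le 2+\#_\Delta(x)/D$ where $\#_\Delta(x)$ is the number of triangles containing $x$; $x$ is curvature sharp if equality holds. *)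

theory Defs
  imports Main Complex_Main
begin

definition simple_graph :: "'a set \<Rightarrow> ('a \<Rightarrow> 'a \<Rightarrow> bool) \<Rightarrow> bool" where
  "simple_graph V E \<longleftrightarrow> (\<forall>x y. E x y \<longrightarrow> x \<in> V \<and> y \<in> V \<and> E y x \<and> x \<noteq> y)"

definition nbrs :: "('a \<Rightarrow> 'a \<Rightarrow> bool) \<Rightarrow> 'a \<Rightarrow> 'a set" where
  "nbrs E x = {y. E x y}"

definition regular_graph :: "'a set \<Rightarrow> ('a \<Rightarrow> 'a \<Rightarrow> bool) \<Rightarrow> nat \<Rightarrow> bool" where
  "regular_graph V E D \<longleftrightarrow> (\<forall>x\<in>V. finite (nbrs E x) \<and> card (nbrs E x) = D)"

definition connected_graph :: "'a set \<Rightarrow> ('a \<Rightarrow> 'a \<Rightarrow> bool) \<Rightarrow> bool" where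
  "connected_graph V E \<longleftrightarrow> (\<forall>x\<in>V. \<forall>y\<in>V. E\<^sup>*\<^sup>* x y)"

definition laplacian :: "('a \<Rightarrow> 'a \<Rightarrow> bool) \<Rightarrow> ('a \<Rightarrow> real) \<Rightarrow> 'a \<Rightarrow> real" where
  "laplacian E f x = (\<Sum>y\<in>nbrs E x. f y - f x)"

definition Gamma :: "('a \<Rightarrow> 'a \<Rightarrow> bool) \<Rightarrow> ('a \<Rightarrow> real) \<Rightarrow> ('a \<Rightarrow> real) \<Rightarrow> 'a \<Rightarrow> real" where
  "Gamma E f g x = (laplacian E (\<lambda>z. f z * g z) x - f x * laplacian E g x
                     - g x * laplacian E f x) / 2"

definition Gamma2 :: "('a \<Rightarrow> 'a \<Rightarrow> bool) \<Rightarrow> ('a \<Rightarrow> real) \<Rightarrow> ('a \<Rightarrow> real) \<Rightarrow> 'a \<Rightarrow> real" where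
  "Gamma2 E f g x = (laplacian E (Gamma E f g) x - Gamma E f (laplacian E g) x
                      - Gamma E g (laplacian E f) x) / 2"

definition BE_curvature :: "('a \<Rightarrow> 'a \<Rightarrow> bool) \<Rightarrow> 'a \<Rightarrow> real" where
  "BE_curvature E x = Sup {K. \<forall>f. Gamma2 E f f x \<ge> K * Gamma E f f x}"

definition num_triangles :: "('a \<Rightarrow> 'a \<Rightarrow> bool) \<Rightarrow> 'a \<Rightarrow> nat" where
  "num_triangles E x = card {{y, z} | y z. E x y \<and> E x z \<and> E y z}"

definition curvature_sharp :: "('a \<Rightarrow> 'a \<Rightarrow> bool) \<Rightarrow> nat \<Rightarrow> 'a \<Rightarrow> bool" where
  "curvature_sharp E D x \<longleftrightarrow> BE_curvature E x = 2 + real (num_triangles E x) / real D"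

end

theory Submission
  imports Defs
begin

text \<open>Test the Bakry-Emery inequality at a sharp vertex \<open>x\<close> with \<open>f = min (d(x,\<cdot>)) 2\<close>,
  perturbed by \<open>e\<close> at one neighbour \<open>y\<close>. Then \<open>\<Gamma>\<^sub>2(f,f)(x) - \<K>\<^sub>\<infinity>(x) \<Gamma>(f,f)(x)\<close> is a
  quadratic in \<open>e\<close> which is nonnegative and, because the curvature bound is attained at the
  unperturbed function, vanishes at \<open>e = 0\<close>. Its linear coefficient therefore vanishes, which
  forces \<open>\<K>\<^sub>\<infinity>(x) = 2 + |N(x) \<inter> N(y)|/2\<close>. This is symmetric in \<open>x\<close> and \<open>y\<close>, so the curvature
  is constant along edges and hence on a connected graph.\<close>

lemma Gamma_eq_sum: "Gamma E f g x = (\<Sum>y\<in>nbrs E x. (f y - f x) * (g y - g x)) / 2"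
proof -
  have "(\<Sum>y\<in>nbrs E x. (f y - f x) * (g y - g x)) =
    (\<Sum>y\<in>nbrs E x. f y * g y - f x * g x) - f x * (\<Sum>y\<in>nbrs E x. g y - g x)
      - g x * (\<Sum>y\<in>nbrs E x. f y - f x)"
    by (simp add: sum_distrib_left sum_subtractf[symmetric] algebra_simps)
  then show ?thesis unfolding Gamma_def laplacian_def by simp
qed

lemma Gamma_self_nonneg: "Gamma E f f x \<ge> 0"
  unfolding Gamma_eq_sum by (auto intro!: sum_nonneg)

lemma two_Gamma2_eq:
  "2 * Gamma2 E f f x =
     (\<Sum>y\<in>nbrs E x. \<Sum>w\<in>nbrs E y. (f w - f y)^2 / 2 - (f y - f x) * (f w - f y))
     - real (card (nbrs E x)) * Gamma E f f x + (laplacian E f x)^2"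
proof -
  let ?N = "nbrs E x"
  have lap_Gamma: "laplacian E (Gamma E f f) x = (\<Sum>y\<in>?N. Gamma E f f y) - real (card ?N) * Gamma E f f x"
    unfolding laplacian_def by (simp add: sum_subtractf)
  have "2 * Gamma E f (laplacian E f) x
      = (\<Sum>y\<in>?N. (f y - f x) * laplacian E f y) - laplacian E f x * (\<Sum>y\<in>?N. f y - f x)"
    unfolding Gamma_eq_sum by (simp add: sum_distrib_left sum_subtractf[symmetric] algebra_simps)
  also have "(\<Sum>y\<in>?N. f y - f x) = laplacian E f x"
    unfolding laplacian_def ..
  finally have Gamma_lap: "2 * Gamma E f (laplacian E f) x
      = (\<Sum>y\<in>?N. (f y - f x) * laplacian E f y) - (laplacian E f x)^2"
    by (simp add: power2_eq_square)
  have "(\<Sum>y\<in>?N. Gamma E f f y) - (\<Sum>y\<in>?N. (f y - f x) * laplacian E f y)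
      = (\<Sum>y\<in>?N. \<Sum>w\<in>nbrs E y. (f w - f y)^2 / 2 - (f y - f x) * (f w - f y))"
    unfolding Gamma_eq_sum laplacian_def
    by (simp add: sum_subtractf[symmetric] sum_distrib_left sum_divide_distrib power2_eq_square)
  then show ?thesis
    unfolding Gamma2_def using lap_Gamma Gamma_lap by simp
qed

lemma nonneg_quadratic_imp_linear_coeff_zero:
  fixes a b :: real
  assumes "\<And>e. a * e + b * e^2 \<ge> 0"
  shows "a = 0"
proof (rule ccontr)
  assume "a \<noteq> 0"
  define B where "B = \<bar>b\<bar> + 1"
  have B: "B > 0" "b < B" unfolding B_def by auto
  have "a * (- a / B) + b * (- a / B)^2 = a^2 * (b - B) / B^2"
    using B by (simp add: field_simps power2_eq_square)
  also have "\<dots> < 0"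
    using \<open>a \<noteq> 0\<close> B by (intro divide_neg_pos mult_pos_neg) auto
  finally show False using assms[of "- a / B"] by simp
qed

lemma two_num_triangles_eq:
  assumes "simple_graph V E" and fin: "finite (nbrs E x)"
  shows "2 * num_triangles E x = (\<Sum>y\<in>nbrs E x. card (nbrs E y \<inter> nbrs E x))"
proof -
  let ?N = "nbrs E x"
  let ?T = "{{y, z} | y z. E x y \<and> E x z \<and> E y z}"
  let ?ordered = "\<lambda>t. {(a, b). a \<in> t \<and> b \<in> t \<and> a \<noteq> b}"
  have irrefl: "\<not> E y y" and sym: "E y z \<Longrightarrow> E z y" for y z
    using assms(1) unfolding simple_graph_def by blast+
  have pairs: "(SIGMA y:?N. nbrs E y \<inter> ?N) = (\<Union>t\<in>?T. ?ordered t)"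
    unfolding nbrs_def using irrefl sym by blast
  have "finite ?T"
    by (rule finite_subset[of _ "Pow ?N"]) (use fin in \<open>auto simp: nbrs_def\<close>)
  moreover have "finite (?ordered t)" if "t \<in> ?T" for t
    using that by (auto intro: finite_subset[of _ "t \<times> t"])
  moreover have "?ordered s \<inter> ?ordered t = {}" if "s \<in> ?T" "t \<in> ?T" "s \<noteq> t" for s t
    using that by fastforce
  moreover have "card (?ordered t) = 2" if "t \<in> ?T" for t
  proof -
    obtain y z where t: "t = {y, z}" "E y z" using \<open>t \<in> ?T\<close> by blast
    then have "y \<noteq> z" using irrefl by blast
    then have "?ordered t = {(y, z), (z, y)}" using t by auto
    then show ?thesis using \<open>y \<noteq> z\<close> by simp
  qed
  ultimately have "card (\<Union>t\<in>?T. ?ordered t) = 2 * card ?T"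
    by (simp add: card_UN_disjoint)
  moreover have "card (SIGMA y:?N. nbrs E y \<inter> ?N) = (\<Sum>y\<in>?N. card (nbrs E y \<inter> ?N))"
    using fin by (subst card_SigmaI) auto
  ultimately show ?thesis unfolding num_triangles_def pairs by simp
qed

text \<open>For \<open>e = 0\<close> this is \<open>min (d(x,\<cdot>)) 2\<close>.\<close>
definition sharp_test_fun :: "('a \<Rightarrow> 'a \<Rightarrow> bool) \<Rightarrow> 'a \<Rightarrow> 'a \<Rightarrow> real \<Rightarrow> 'a \<Rightarrow> real" where
  "sharp_test_fun E x y\<^sub>0 e v =
     (if v = x then 0 else if E x v then (if v = y\<^sub>0 then 1 + e else 1) else 2)"

locale regular_simple_graph =
  fixes V :: "'a set" and E :: "'a \<Rightarrow> 'a \<Rightarrow> bool" and D :: nat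
  assumes simple: "simple_graph V E" and regular: "regular_graph V E D"
begin

lemma adj_sym: "E x y \<Longrightarrow> E y x"
  and adj_irrefl: "\<not> E x x"
  and adj_in_V: "E x y \<Longrightarrow> y \<in> V"
  using simple unfolding simple_graph_def by blast+

lemma finite_nbrs: "x \<in> V \<Longrightarrow> finite (nbrs E x)"
  and card_nbrs: "x \<in> V \<Longrightarrow> card (nbrs E x) = D"
  using regular unfolding regular_graph_def by auto

lemma degree_ge_1:
  assumes "x \<in> V" and "E x y"
  shows "D \<ge> 1"
proof -
  have "y \<in> nbrs E x" using assms(2) unfolding nbrs_def by simp
  then show ?thesis
    using finite_nbrs[OF assms(1)] card_nbrs[OF assms(1)]
    by (auto simp: Suc_le_eq card_gt_0_iff)
qed

lemma Gamma2_ge_neg_degree: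
  assumes x: "x \<in> V"
  shows "Gamma2 E f f x \<ge> - real D * Gamma E f f x"
proof -
  let ?N = "nbrs E x"
  have inner: "(\<Sum>w\<in>nbrs E y. (f w - f y)^2 / 2 - (f y - f x) * (f w - f y))
      \<ge> - real D * (f y - f x)^2 / 2"
    if "y \<in> ?N" for y
  proof -
    have y: "y \<in> V" using that adj_in_V unfolding nbrs_def by auto
    have "(\<Sum>w\<in>nbrs E y. - ((f y - f x)^2 / 2))
        \<le> (\<Sum>w\<in>nbrs E y. (f w - f y)^2 / 2 - (f y - f x) * (f w - f y))"
    proof (rule sum_mono)
      fix w
      have "(f w - f y)^2 / 2 - (f y - f x) * (f w - f y) + (f y - f x)^2 / 2
          = ((f w - f y) - (f y - f x))^2 / 2"
        by (simp add: power2_eq_square field_simps)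
      then show "- ((f y - f x)^2 / 2) \<le> (f w - f y)^2 / 2 - (f y - f x) * (f w - f y)"
        by (smt (verit) zero_le_power2 divide_nonneg_pos)
    qed
    then show ?thesis using card_nbrs[OF y] by simp
  qed
  have "- real D * Gamma E f f x = (\<Sum>y\<in>?N. - real D * (f y - f x)^2 / 2)"
    unfolding Gamma_eq_sum by (simp add: sum_distrib_left sum_divide_distrib power2_eq_square)
  also have "\<dots> \<le> (\<Sum>y\<in>?N. \<Sum>w\<in>nbrs E y. (f w - f y)^2 / 2 - (f y - f x) * (f w - f y))"
    by (rule sum_mono) (rule inner)
  finally show ?thesis
    using two_Gamma2_eq[of E f x, unfolded card_nbrs[OF x]] zero_le_power2[of "laplacian E f x"]
    by linarith
qed

lemma Gamma2_ge_BE_curvature: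
  assumes x: "x \<in> V"
  shows "Gamma2 E f f x \<ge> BE_curvature E x * Gamma E f f x"
proof (cases "Gamma E f f x = 0")
  case True
  then show ?thesis using Gamma2_ge_neg_degree[OF x, of f] by simp
next
  case False
  then have pos: "Gamma E f f x > 0" using Gamma_self_nonneg[of E f x] by linarith
  let ?S = "{K. \<forall>f. Gamma2 E f f x \<ge> K * Gamma E f f x}"
  have "Sup ?S \<le> Gamma2 E f f x / Gamma E f f x"
  proof (rule cSup_least)
    show "?S \<noteq> {}" using Gamma2_ge_neg_degree[OF x] by blast
    show "K \<le> Gamma2 E f f x / Gamma E f f x" if "K \<in> ?S" for K
      using that pos by (simp add: field_simps)
  qed
  then show ?thesis unfolding BE_curvature_def using pos by (simp add: field_simps)
qed

lemma sum_nbrs_of_nbr: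
  assumes x: "x \<in> V" and y: "E x y"
    and far: "\<And>w. w \<in> nbrs E y \<Longrightarrow> w \<noteq> x \<Longrightarrow> \<not> E x w \<Longrightarrow> g w = C"
  shows "(\<Sum>w\<in>nbrs E y. g w) = g x + (\<Sum>w\<in>nbrs E y \<inter> nbrs E x. g w)
           + (real D - 1 - real (card (nbrs E y \<inter> nbrs E x))) * C"
proof -
  let ?R = "nbrs E y - nbrs E x - {x}"
  have fin: "finite (nbrs E y)" and card: "card (nbrs E y) = D"
    using adj_in_V[OF y] finite_nbrs card_nbrs by auto
  have "x \<in> nbrs E y" and "x \<notin> nbrs E x"
    using adj_sym[OF y] adj_irrefl unfolding nbrs_def by auto
  then have split: "nbrs E y = insert x ((nbrs E y \<inter> nbrs E x) \<union> ?R)"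
    and disj: "x \<notin> (nbrs E y \<inter> nbrs E x) \<union> ?R" "(nbrs E y \<inter> nbrs E x) \<inter> ?R = {}"
    by auto
  have "sum g (nbrs E y) = g x + sum g (nbrs E y \<inter> nbrs E x) + sum g ?R"
    and "card (nbrs E y) = 1 + card (nbrs E y \<inter> nbrs E x) + card ?R"
    using fin disj by (subst split; simp add: sum.union_disjoint card_Un_disjoint)+
  moreover have "sum g ?R = real (card ?R) * C"
    using far unfolding nbrs_def by simp
  ultimately show ?thesis using card by simp
qed

lemma sum_nbrs_single_point:
  assumes x: "x \<in> V" and y\<^sub>0: "E x y\<^sub>0"
  shows "(\<Sum>y\<in>nbrs E x. if y = y\<^sub>0 then a else b) = a + (real D - 1) * b"
proof -
  have y\<^sub>0N: "y\<^sub>0 \<in> nbrs E x" using y\<^sub>0 unfolding nbrs_def by simp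
  with finite_nbrs[OF x] card_nbrs[OF x] degree_ge_1[OF x y\<^sub>0] show ?thesis
    by (simp add: sum.remove of_nat_diff)
qed

context
  fixes x y\<^sub>0 :: 'a and e :: real
  assumes x: "x \<in> V" and y\<^sub>0: "E x y\<^sub>0"
begin

abbreviation (input) f where "f \<equiv> sharp_test_fun E x y\<^sub>0 e"

lemma test_fun_center: "f x = 0"
  and test_fun_nbr: "y \<in> nbrs E x \<Longrightarrow> f y = (if y = y\<^sub>0 then 1 + e else 1)"
  and test_fun_y0: "f y\<^sub>0 = 1 + e"
  and test_fun_far: "y \<noteq> x \<Longrightarrow> \<not> E x y \<Longrightarrow> f y = 2"
  using adj_irrefl y\<^sub>0 unfolding sharp_test_fun_def nbrs_def by auto

lemma two_Gamma_test_fun: "2 * Gamma E f f x = real D + 2 * e + e^2"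
proof -
  have "2 * Gamma E f f x = (\<Sum>y\<in>nbrs E x. if y = y\<^sub>0 then (1 + e)^2 else 1)"
    unfolding Gamma_eq_sum
    by (simp, rule sum.cong) (simp_all add: test_fun_center test_fun_nbr power2_eq_square)
  then show ?thesis
    unfolding sum_nbrs_single_point[OF x y\<^sub>0] by (simp add: power2_eq_square algebra_simps)
qed

lemma laplacian_test_fun: "laplacian E f x = real D + e"
proof -
  have "laplacian E f x = (\<Sum>y\<in>nbrs E x. if y = y\<^sub>0 then 1 + e else 1)"
    unfolding laplacian_def by (rule sum.cong) (simp_all add: test_fun_center test_fun_nbr)
  then show ?thesis
    unfolding sum_nbrs_single_point[OF x y\<^sub>0] by simp
qed

abbreviation (input) common :: "'a \<Rightarrow> real" where
  "common y \<equiv> real (card (nbrs E y \<inter> nbrs E x))"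

abbreviation (input) two_step_term :: "'a \<Rightarrow> 'a \<Rightarrow> real" where
  "two_step_term y w \<equiv> (f w - f y)^2 / 2 - (f y - f x) * (f w - f y)"

lemma inner_sum_test_fun_y0:
  "(\<Sum>w\<in>nbrs E y\<^sub>0. two_step_term y\<^sub>0 w) = 3/2 * (1 + e)^2 + common y\<^sub>0 * (e^2/2 + (1 + e) * e)
     + (real D - 1 - common y\<^sub>0) * ((1 - e)^2/2 - (1 + e) * (1 - e))"
proof -
  have "(\<Sum>w\<in>nbrs E y\<^sub>0. two_step_term y\<^sub>0 w)
      = two_step_term y\<^sub>0 x + (\<Sum>w\<in>nbrs E y\<^sub>0 \<inter> nbrs E x. two_step_term y\<^sub>0 w)
        + (real D - 1 - common y\<^sub>0) * ((1 - e)^2/2 - (1 + e) * (1 - e))"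
    by (rule sum_nbrs_of_nbr[OF x y\<^sub>0])
       (simp add: test_fun_far test_fun_y0 test_fun_center power2_eq_square)
  also have "(\<Sum>w\<in>nbrs E y\<^sub>0 \<inter> nbrs E x. two_step_term y\<^sub>0 w)
      = (\<Sum>w\<in>nbrs E y\<^sub>0 \<inter> nbrs E x. e^2/2 + (1 + e) * e)"
    using adj_irrefl[of y\<^sub>0]
    by (intro sum.cong)
       (auto simp: test_fun_center test_fun_nbr test_fun_y0 nbrs_def power2_eq_square algebra_simps)
  also have "\<dots> = common y\<^sub>0 * (e^2/2 + (1 + e) * e)"
    by simp
  also have "two_step_term y\<^sub>0 x = 3/2 * (1 + e)^2"
    by (simp add: test_fun_center test_fun_y0 power2_eq_square field_simps)
  finally show ?thesis .
qed

lemma inner_sum_test_fun_other: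
  assumes y: "E x y" "y \<noteq> y\<^sub>0"
  shows "(\<Sum>w\<in>nbrs E y. two_step_term y w)
           = 3/2 + (if E y y\<^sub>0 then e^2/2 - e else 0) - (real D - 1 - common y) / 2"
proof -
  have fy: "f y = 1" using y test_fun_nbr unfolding nbrs_def by simp
  have "(\<Sum>w\<in>nbrs E y. two_step_term y w)
      = two_step_term y x + (\<Sum>w\<in>nbrs E y \<inter> nbrs E x. two_step_term y w)
        + (real D - 1 - common y) * (- 1/2)"
    by (rule sum_nbrs_of_nbr[OF x y(1)]) (simp add: test_fun_far test_fun_center fy)
  also have "(\<Sum>w\<in>nbrs E y \<inter> nbrs E x. two_step_term y w)
      = (\<Sum>w\<in>nbrs E y \<inter> nbrs E x. if w = y\<^sub>0 then e^2/2 - e else 0)"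
    by (intro sum.cong) (auto simp: test_fun_center test_fun_nbr fy power2_eq_square)
  also have "\<dots> = (if E y y\<^sub>0 then e^2/2 - e else 0)"
    using finite_nbrs[OF adj_in_V[OF y(1)]] y\<^sub>0 by (simp add: nbrs_def)
  also have "two_step_term y x = 3/2"
    by (simp add: test_fun_center fy)
  finally show ?thesis by simp
qed

lemma sum_inner_sums_test_fun_others:
  "(\<Sum>y\<in>nbrs E x - {y\<^sub>0}. \<Sum>w\<in>nbrs E y. two_step_term y w)
     = (real D - 1) * (4 - real D) / 2 + common y\<^sub>0 * (e^2/2 - e)
       + (2 * real (num_triangles E x) - common y\<^sub>0) / 2"
proof -
  let ?N = "nbrs E x"
  have fin: "finite ?N" and card: "card ?N = D" and y\<^sub>0N: "y\<^sub>0 \<in> ?N"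
    using finite_nbrs[OF x] card_nbrs[OF x] y\<^sub>0 unfolding nbrs_def by auto
  have "(\<Sum>y\<in>?N - {y\<^sub>0}. \<Sum>w\<in>nbrs E y. two_step_term y w)
      = (\<Sum>y\<in>?N - {y\<^sub>0}. (4 - real D) / 2 + (if E y y\<^sub>0 then e^2/2 - e else 0) + common y / 2)"
  proof (rule sum.cong[OF refl])
    fix y assume "y \<in> ?N - {y\<^sub>0}"
    then have "E x y" "y \<noteq> y\<^sub>0" unfolding nbrs_def by auto
    then show "(\<Sum>w\<in>nbrs E y. two_step_term y w)
        = (4 - real D) / 2 + (if E y y\<^sub>0 then e^2/2 - e else 0) + common y / 2"
      by (subst inner_sum_test_fun_other) (simp_all add: field_simps)
  qed
  also have "\<dots> = (real D - 1) * (4 - real D) / 2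
      + (\<Sum>y\<in>?N - {y\<^sub>0}. if E y y\<^sub>0 then e^2/2 - e else 0) + (\<Sum>y\<in>?N - {y\<^sub>0}. common y) / 2"
    using fin card y\<^sub>0N degree_ge_1[OF x y\<^sub>0]
    by (simp add: sum.distrib sum_divide_distrib of_nat_diff)
  also have "(\<Sum>y\<in>?N - {y\<^sub>0}. if E y y\<^sub>0 then e^2/2 - e else 0) = common y\<^sub>0 * (e^2/2 - e)"
  proof -
    have "{y \<in> ?N - {y\<^sub>0}. E y y\<^sub>0} = nbrs E y\<^sub>0 \<inter> ?N"
      using adj_sym adj_irrefl unfolding nbrs_def by blast
    then show ?thesis using fin by (simp add: sum.If_cases Int_def)
  qed
  also have "(\<Sum>y\<in>?N - {y\<^sub>0}. common y) = 2 * real (num_triangles E x) - common y\<^sub>0"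
  proof -
    have "(\<Sum>y\<in>?N. common y) = 2 * real (num_triangles E x)"
      using two_num_triangles_eq[OF simple fin] by (metis of_nat_mult of_nat_numeral of_nat_sum)
    then show ?thesis using fin y\<^sub>0N by (simp add: sum_diff1)
  qed
  finally show ?thesis .
qed

lemma two_Gamma2_test_fun:
  "2 * Gamma2 E f f x = 2 * real D + real (num_triangles E x)
     + (4 + common y\<^sub>0) * e + (real D + 1 + common y\<^sub>0 / 2) * e^2"
proof -
  have "(\<Sum>y\<in>nbrs E x. \<Sum>w\<in>nbrs E y. two_step_term y w)
      = (\<Sum>w\<in>nbrs E y\<^sub>0. two_step_term y\<^sub>0 w)
        + (\<Sum>y\<in>nbrs E x - {y\<^sub>0}. \<Sum>w\<in>nbrs E y. two_step_term y w)"
    using finite_nbrs[OF x] y\<^sub>0 by (simp add: sum.remove nbrs_def)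
  moreover have "Gamma E f f x = (real D + 2 * e + e^2) / 2"
    using two_Gamma_test_fun by simp
  ultimately show ?thesis
    unfolding two_Gamma2_eq card_nbrs[OF x] laplacian_test_fun
      inner_sum_test_fun_y0 sum_inner_sums_test_fun_others
    by (simp add: power2_eq_square field_simps)
qed

end

lemma BE_curvature_eq_common_nbrs:
  assumes x: "x \<in> V" and sharp: "curvature_sharp E D x" and y: "E x y"
  shows "BE_curvature E x = 2 + real (card (nbrs E y \<inter> nbrs E x)) / 2"
proof -
  let ?K = "BE_curvature E x" and ?c = "real (card (nbrs E y \<inter> nbrs E x))"
  have K: "?K * real D = 2 * real D + real (num_triangles E x)"
    using sharp degree_ge_1[OF x y] unfolding curvature_sharp_def by (simp add: field_simps)
  have "(4 + ?c - 2 * ?K) * e + (real D + 1 + ?c / 2 - ?K) * e^2 \<ge> 0" for e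
  proof -
    let ?f = "sharp_test_fun E x y e"
    have "0 \<le> 2 * Gamma2 E ?f ?f x - ?K * (2 * Gamma E ?f ?f x)"
      using Gamma2_ge_BE_curvature[OF x, of ?f] by simp
    also have "\<dots> = (4 + ?c - 2 * ?K) * e + (real D + 1 + ?c / 2 - ?K) * e^2"
      unfolding two_Gamma2_test_fun[OF x y] two_Gamma_test_fun[OF x y]
      using K by (simp add: algebra_simps)
    finally show ?thesis .
  qed
  then have "4 + ?c - 2 * ?K = 0"
    by (rule nonneg_quadratic_imp_linear_coeff_zero)
  then show ?thesis by simp
qed

lemma BE_curvature_adj_eq:
  assumes "x \<in> V" "E x y" and "curvature_sharp E D x" "curvature_sharp E D y"
  shows "BE_curvature E x = BE_curvature E y"
  using BE_curvature_eq_common_nbrs[OF assms(1,3,2)]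
    BE_curvature_eq_common_nbrs[OF adj_in_V[OF assms(2)] assms(4) adj_sym[OF assms(2)]]
  by (simp add: Int_commute)

end

lemma connected_graph_locally_constant:
  assumes "connected_graph V E"
    and adj: "\<And>x y. E x y \<Longrightarrow> g x = g y"
    and "x \<in> V" "y \<in> V"
  shows "g x = g y"
proof -
  have "E\<^sup>*\<^sup>* x y" using assms(1,3,4) unfolding connected_graph_def by blast
  then show ?thesis by (induction rule: rtranclp_induct) (simp_all add: adj)
qed

theorem mainTheorem3:
  fixes V :: "'a set" and E :: "'a \<Rightarrow> 'a \<Rightarrow> bool" and D :: nat
  assumes "simple_graph V E"
    and "regular_graph V E D"
    and "connected_graph V E"
    and "\<forall>x\<in>V. curvature_sharp E D x"
  shows "\<exists>K::real. \<forall>x\<in>V. BE_curvature E x = K"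
proof -
  interpret regular_simple_graph V E D
    using assms(1,2) by unfold_locales
  have "BE_curvature E x = BE_curvature E y" if "E x y" for x y
  proof -
    have "x \<in> V" "y \<in> V" using adj_in_V adj_sym that by blast+
    then show ?thesis using BE_curvature_adj_eq that assms(4) by blast
  qed
  then have "BE_curvature E x = BE_curvature E x0" if "x \<in> V" "x0 \<in> V" for x x0
    using connected_graph_locally_constant[OF assms(3)] that by blast
  then show ?thesis by (cases "V = {}") blast+
qed

end
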